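(* There is an absolute constant $C_5$ such that the following holds for all $p\in(0,0.1)$. Let $R_1,\dots,R_{n+1}$ be a good sequence of rectangles with $\dim(R_1)=(a_1,b_1)$, let $a_0=b_0:=A$, $s_0:=a_1-a_0$, $t_0:=b_1-b_0$. Then $$\mathbb{P}_p\big[G(R_1)\big]\le \exp\big[-s_0\,g(b_0q)-t_0\,g(a_0q)+C_5q^{-1/2}\log q^{-1}\big].$$
   Context: $q=-\log(1-p)$, $A=\lceil 1/\sqrt q\rceil$, $B=\lfloor q^{-1}\log q^{-1}\rfloor$; $\beta(u)=\frac{u+\sqrt{u(4-3u)}}{2}$, $g(z)=-\log\beta(1-e^{-z})$. Under $\mathbb{P}_p$ the initial configuration assigns independent states to sites of $\mathbb{Z}^2$: the origin is active with probability $p$, else empty; every other site is occupied with probability $p$, else empty. A rectangle is $\{a,\dots,c\}\times\{b,\dots,d\}\subset\mathbb{Z}^2$ with dimensions $(c-a+1,d-b+1)$; columns are $\{x\}\times\{b,\dots,d\}$, rows $\{a,\dots,c\}\times\{y\}$. A double gap in the columns (rows) is a pair of consecutive columns (rows) consisting entirely of initially empty sites; $G(R)$ is the event that $R$ has no double gap in the columns or rows. A sequence of rectangles $R_1,\dots,R_{n+1}$ ($n\ge1$) with $\dim(R_i)=(a_i,b_i)$, $s_i=a_{i+1}-a_i$, $t_i=b_{i+1}-b_i$ is good if: (i) $0\in R_1\subseteq\dots\subseteq R_{n+1}$; (ii) $\min(a_1,b_1)\in[A,A+3]$; (iii) $a_n+b_n\le B$; (iv) $a_{n+1}+b_{n+1}>B$;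 (v) for $i=1,\dots,n$, $s_i\ge a_i\sqrt q$ or $t_i\ge b_i\sqrt q$; (vi) for $i=1,\dots,n$, $s_i<a_i\sqrt q+4$ and $t_i<b_i\sqrt q+4$. *)

theory Defs
  imports "HOL-Probability.Probability"
begin

definition qq :: "real \<Rightarrow> real" where "qq p = - ln (1 - p)"
definition AA :: "real \<Rightarrow> int" where "AA p = \<lceil>1 / sqrt (qq p)\<rceil>"
definition BB :: "real \<Rightarrow> int" where "BB p = \<lfloor>(1 / qq p) * ln (1 / qq p)\<rfloor>"

definition beta :: "real \<Rightarrow> real" where "beta u = (u + sqrt (u * (4 - 3 * u))) / 2"
definition gfun :: "real \<Rightarrow> real" where "gfun z = - ln (beta (1 - exp (- z)))"

datatype site_state = Empty | Occupied | Active

definition site_pmf :: "real \<Rightarrow> int \<times> int \<Rightarrow> site_state pmf" where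
  "site_pmf p x = map_pmf (\<lambda>b. if b then (if x = (0, 0) then Active else Occupied) else Empty)
                          (bernoulli_pmf p)"

definition Pp :: "real \<Rightarrow> ((int \<times> int) \<Rightarrow> site_state) measure" where
  "Pp p = PiM UNIV (\<lambda>x. measure_pmf (site_pmf p x))"

type_synonym rect = "int \<times> int \<times> int \<times> int"

definition rset :: "rect \<Rightarrow> (int \<times> int) set" where
  "rset R = (case R of (a, b, c, d) \<Rightarrow> {a..c} \<times> {b..d})"

definition rwidth :: "rect \<Rightarrow> int" where
  "rwidth R = (case R of (a, b, c, d) \<Rightarrow> c - a + 1)"

definition rheight :: "rect \<Rightarrow> int" where
  "rheight R = (case R of (a, b, c, d) \<Rightarrow> d - b + 1)"

definition double_gap_cols :: "rect \<Rightarrow> ((int \<times> int) \<Rightarrow> site_state) \<Rightarrow> bool" where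
  "double_gap_cols R \<omega> = (case R of (a, b, c, d) \<Rightarrow>
     (\<exists>x. a \<le> x \<and> x + 1 \<le> c \<and> (\<forall>y\<in>{b..d}. \<omega> (x, y) = Empty \<and> \<omega> (x + 1, y) = Empty)))"

definition double_gap_rows :: "rect \<Rightarrow> ((int \<times> int) \<Rightarrow> site_state) \<Rightarrow> bool" where
  "double_gap_rows R \<omega> = (case R of (a, b, c, d) \<Rightarrow>
     (\<exists>y. b \<le> y \<and> y + 1 \<le> d \<and> (\<forall>x\<in>{a..c}. \<omega> (x, y) = Empty \<and> \<omega> (x, y + 1) = Empty)))"

definition G_event :: "rect \<Rightarrow> ((int \<times> int) \<Rightarrow> site_state) set" where
  "G_event R = {\<omega>. \<not> double_gap_cols R \<omega> \<and> \<not> double_gap_rows R \<omega>}"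

text \<open>Good sequence R 1, ..., R (n+1) (indices 1..n+1 of R are used).\<close>
definition good_seq :: "real \<Rightarrow> nat \<Rightarrow> (nat \<Rightarrow> rect) \<Rightarrow> bool" where
  "good_seq p n R \<longleftrightarrow> n \<ge> 1
    \<and> (0, 0) \<in> rset (R 1)
    \<and> (\<forall>i\<in>{1..n}. rset (R i) \<subseteq> rset (R (i + 1)))
    \<and> min (rwidth (R 1)) (rheight (R 1)) \<in> {AA p..AA p + 3}
    \<and> rwidth (R n) + rheight (R n) \<le> BB p
    \<and> rwidth (R (n + 1)) + rheight (R (n + 1)) > BB p
    \<and> (\<forall>i\<in>{1..n}.
         let s = rwidth (R (i + 1)) - rwidth (R i); t = rheight (R (i + 1)) - rheight (R i)
         in (real_of_int s \<ge> rwidth (R i) * sqrt (qq p) \<or> real_of_int t \<ge> rheight (R i) * sqrt (qq p))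
          \<and> real_of_int s < rwidth (R i) * sqrt (qq p) + 4
          \<and> real_of_int t < rheight (R i) * sqrt (qq p) + 4)"

end

theory Submission
  imports Defs
begin

(*
  A rectangle without double gaps has in particular no two consecutive empty rows, and no
  two consecutive empty columns. Rows of width w are independent and each is empty with
  probability 1 - u, where u = 1 - (1 - p)^w = 1 - exp (-w q). The probability f k that k
  rows contain no two consecutive empty ones satisfies f (k + 2) <= u f (k + 1) + u (1 - u) f k,
  and beta u is the positive root of the characteristic equation x^2 = u x + u (1 - u).
  Hence P[G(R)] <= beta(u)^(h - 1) = exp (-(h - 1) g(w q)), applied with w the shorter side.

  The shorter side is within 3 of A, which is about q^(-1/2), and w + h <= B <= q^(-1) log q^(-1).
  Near z = A q >= q^(1/2) the function g decreases with slope O(1/z), so g(w q) >= g(A q) - 36 q^(1/2);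
  moreover g(A q) <= log q^(-1). Replacing g(w q) by g(A q) and h - 1 by s0 + t0 therefore costs
  at most 39 q^(-1/2) log q^(-1).
*)

section \<open>Runs without two consecutive successes\<close>

definition no_two_consecutive :: "nat \<Rightarrow> (nat \<Rightarrow> bool) \<Rightarrow> bool" where
  "no_two_consecutive n v \<longleftrightarrow> (\<forall>i. Suc i < n \<longrightarrow> \<not> (v i \<and> v (Suc i)))"

lemma no_two_consecutive_restrict:
  "m \<le> n \<Longrightarrow> no_two_consecutive m (restrict v {..<n}) = no_two_consecutive m v"
  by (auto simp: no_two_consecutive_def)

lemma no_two_consecutive_Suc_SucD:
  "no_two_consecutive (Suc (Suc k)) v \<Longrightarrow>
     no_two_consecutive (Suc k) v \<and> \<not> v (Suc k) \<or> no_two_consecutive k v \<and> \<not> v k \<and> v (Suc k)"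
  by (auto simp: no_two_consecutive_def less_Suc_eq)

lemma two_step_recurrence_le_power:
  fixes f :: "nat \<Rightarrow> real"
  assumes rec: "\<And>k. f (Suc (Suc k)) \<le> u * f (Suc k) + u * (1 - u) * f k"
    and u: "0 \<le> u" "u \<le> 1" and f: "f 0 \<le> 1" "f 1 \<le> 1"
    and lam: "0 < lam" "lam \<le> 1" "lam\<^sup>2 = u * lam + u * (1 - u)"
  shows "lam * f n \<le> lam ^ n"
proof -
  have "lam * f n \<le> lam ^ n \<and> lam * f (Suc n) \<le> lam ^ Suc n"
  proof (induction n)
    case 0
    have "lam * f 0 \<le> lam" "lam * f 1 \<le> lam"
      using f lam by (simp_all add: mult_left_le)
    then show ?case using lam(2) by simp
  next
    case (Suc n)
    have "lam * f (Suc (Suc n)) \<le> lam * (u * f (Suc n) + u * (1 - u) * f n)"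
      using rec lam by (simp add: mult_left_mono)
    also have "\<dots> = u * (lam * f (Suc n)) + u * (1 - u) * (lam * f n)"
      by (simp add: algebra_simps)
    also have "\<dots> \<le> u * lam ^ Suc n + u * (1 - u) * lam ^ n"
      using Suc u by (intro add_mono mult_left_mono) auto
    also have "\<dots> = lam ^ n * (u * lam + u * (1 - u))"
      by (simp add: algebra_simps)
    also have "\<dots> = lam ^ Suc (Suc n)"
      by (simp add: lam(3)[symmetric] power2_eq_square)
    finally show ?case using Suc by simp
  qed
  then show ?thesis ..
qed

lemma sets_PiM_finite_count_space:
  fixes S :: "('i \<Rightarrow> 'b::finite) set"
  assumes "finite I" "S \<subseteq> space (PiM I (\<lambda>_. count_space UNIV))"
  shows "S \<in> sets (PiM I (\<lambda>_. count_space UNIV))"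
proof -
  have "finite (space (PiM I (\<lambda>_. count_space (UNIV :: 'b set))))"
    using assms(1) by (simp add: space_PiM finite_PiE)
  then have "finite S" using assms(2) finite_subset by blast
  moreover have "{v} \<in> sets (PiM I (\<lambda>_. count_space UNIV))" if "v \<in> S" for v
  proof -
    have "v \<in> PiE I (\<lambda>_. UNIV)" using that assms(2) by (auto simp: space_PiM)
    then have "{v} = PiE I (\<lambda>i. {v i})" by (simp add: PiE_singleton PiE_iff)
    then show ?thesis by (simp add: sets_PiM_I_finite[OF assms(1)])
  qed
  ultimately have "(\<Union>v\<in>S. {v}) \<in> sets (PiM I (\<lambda>_. count_space UNIV))"
    by (intro sets.finite_UN) auto
  then show ?thesis by simp
qed

context prob_space
begin

lemma events_finite_block:
  fixes X :: "'i \<Rightarrow> 'a \<Rightarrow> 'b::finite"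
  assumes X: "\<And>i. i \<in> J \<Longrightarrow> random_variable (count_space UNIV) (X i)" and "finite J"
    and block: "\<And>v. P (restrict v J) = P v"
  shows "{\<omega> \<in> space M. P (\<lambda>i. X i \<omega>)} \<in> events"
proof -
  have "(\<lambda>\<omega>. restrict (\<lambda>i. X i \<omega>) J) \<in> measurable M (PiM J (\<lambda>_. count_space UNIV))"
    using X by (intro measurable_restrict) auto
  then have "(\<lambda>\<omega>. restrict (\<lambda>i. X i \<omega>) J) -` {v \<in> space (PiM J (\<lambda>_. count_space UNIV)). P v}
      \<inter> space M \<in> events"
    by (rule measurable_sets) (rule sets_PiM_finite_count_space[OF \<open>finite J\<close>], auto)
  also have "(\<lambda>\<omega>. restrict (\<lambda>i. X i \<omega>) J) -` {v \<in> space (PiM J (\<lambda>_. count_space UNIV)). P v}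
      \<inter> space M = {\<omega> \<in> space M. P (\<lambda>i. X i \<omega>)}"
    by (auto simp: space_PiM block)
  finally show ?thesis .
qed

lemma prob_finite_block_inter_indep:
  fixes X :: "'i \<Rightarrow> 'a \<Rightarrow> 'b::finite"
  assumes ind: "indep_vars (\<lambda>_. count_space UNIV) X I"
    and J: "finite J" "J \<subseteq> I" and k: "k \<in> I" "k \<notin> J"
    and block: "\<And>v. P (restrict v J) = P v"
  shows "prob {\<omega> \<in> space M. P (\<lambda>i. X i \<omega>) \<and> X k \<omega> = b}
       = prob {\<omega> \<in> space M. P (\<lambda>i. X i \<omega>)} * prob {\<omega> \<in> space M. X k \<omega> = b}"
proof -
  let ?SJ = "{v \<in> space (PiM J (\<lambda>_. count_space UNIV)). P v}"
  let ?Sk = "{v \<in> space (PiM {k} (\<lambda>_. count_space UNIV)). v k = b}"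
  have indep: "indep_var (PiM J (\<lambda>_. count_space UNIV)) (\<lambda>\<omega>. restrict (\<lambda>i. X i \<omega>) J)
                  (PiM {k} (\<lambda>_. count_space UNIV)) (\<lambda>\<omega>. restrict (\<lambda>i. X i \<omega>) {k})"
    using J k by (intro indep_var_restrict[OF ind]) auto
  have product: "prob ((\<lambda>\<omega>. (restrict (\<lambda>i. X i \<omega>) J, restrict (\<lambda>i. X i \<omega>) {k})) -` (?SJ \<times> ?Sk) \<inter> space M)
      = prob ((\<lambda>\<omega>. restrict (\<lambda>i. X i \<omega>) J) -` ?SJ \<inter> space M)
        * prob ((\<lambda>\<omega>. restrict (\<lambda>i. X i \<omega>) {k}) -` ?Sk \<inter> space M)"
    by (rule indep_varD[OF indep]; rule sets_PiM_finite_count_space) (use J in auto)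
  have joint: "(\<lambda>\<omega>. (restrict (\<lambda>i. X i \<omega>) J, restrict (\<lambda>i. X i \<omega>) {k})) -` (?SJ \<times> ?Sk) \<inter> space M
      = {\<omega> \<in> space M. P (\<lambda>i. X i \<omega>) \<and> X k \<omega> = b}"
    by (auto simp: space_PiM block)
  have coordinate: "(\<lambda>\<omega>. restrict (\<lambda>i. X i \<omega>) {k}) -` ?Sk \<inter> space M = {\<omega> \<in> space M. X k \<omega> = b}"
    by (auto simp: space_PiM)
  have marginal: "(\<lambda>\<omega>. restrict (\<lambda>i. X i \<omega>) J) -` ?SJ \<inter> space M = {\<omega> \<in> space M. P (\<lambda>i. X i \<omega>)}"
    by (auto simp: space_PiM block)
  show ?thesis using product unfolding joint marginal coordinate .
qed

lemma events_no_two_consecutive: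
  fixes X :: "nat \<Rightarrow> 'a \<Rightarrow> bool"
  assumes "\<And>i. random_variable (count_space UNIV) (X i)"
  shows "{\<omega> \<in> space M. no_two_consecutive n (\<lambda>i. X i \<omega>)} \<in> events"
proof (rule events_finite_block[where J = "{..<n}" and X = X])
  show "no_two_consecutive n (restrict v {..<n}) = no_two_consecutive n v" for v
    by (rule no_two_consecutive_restrict) simp
qed (simp_all add: assms)

lemma prob_no_two_consecutive_Suc_Suc:
  fixes X :: "nat \<Rightarrow> 'a \<Rightarrow> bool"
  assumes ind: "indep_vars (\<lambda>_. count_space UNIV) X UNIV"
    and pX: "\<And>i. prob {\<omega> \<in> space M. X i \<omega>} = 1 - u"
  shows "prob {\<omega> \<in> space M. no_two_consecutive (Suc (Suc k)) (\<lambda>i. X i \<omega>)}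
    \<le> u * prob {\<omega> \<in> space M. no_two_consecutive (Suc k) (\<lambda>i. X i \<omega>)}
      + u * (1 - u) * prob {\<omega> \<in> space M. no_two_consecutive k (\<lambda>i. X i \<omega>)}"
proof -
  have rv: "random_variable (count_space UNIV) (X i)" for i
    using ind by (simp add: indep_vars_def)
  have ev: "{\<omega> \<in> space M. P (\<lambda>i. X i \<omega>)} \<in> events"
    if "\<And>v. P (restrict v {..<n}) = P v" for P n
    by (rule events_finite_block[where J = "{..<n}" and X = X and P = P]) (simp_all add: rv that)
  have indep: "prob {\<omega> \<in> space M. P (\<lambda>i. X i \<omega>) \<and> X n \<omega> = b}
      = prob {\<omega> \<in> space M. P (\<lambda>i. X i \<omega>)} * prob {\<omega> \<in> space M. X n \<omega> = b}"
    if "\<And>v. P (restrict v {..<n}) = P v" for P n b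
    by (rule prob_finite_block_inter_indep[where J = "{..<n}" and P = P, OF ind]) (simp_all add: that)
  have pF: "prob {\<omega> \<in> space M. X i \<omega> = False} = u" for i
  proof -
    have "{\<omega> \<in> space M. X i \<omega> = False} = space M - {\<omega> \<in> space M. X i \<omega>}" by auto
    moreover have "{\<omega> \<in> space M. X i \<omega>} \<in> events"
      using ev[of "\<lambda>v. v i" "Suc i"] by simp
    ultimately show ?thesis using prob_compl pX by simp
  qed
  let ?A = "{\<omega> \<in> space M. no_two_consecutive (Suc k) (\<lambda>i. X i \<omega>) \<and> X (Suc k) \<omega> = False}"
  let ?B = "{\<omega> \<in> space M. (no_two_consecutive k (\<lambda>i. X i \<omega>) \<and> \<not> X k \<omega>) \<and> X (Suc k) \<omega> = True}"
  have A: "?A \<in> events"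
    using ev[of "\<lambda>v. no_two_consecutive (Suc k) v \<and> v (Suc k) = False" "Suc (Suc k)"]
    by (simp add: no_two_consecutive_restrict)
  have B: "?B \<in> events"
    using ev[of "\<lambda>v. (no_two_consecutive k v \<and> \<not> v k) \<and> v (Suc k) = True" "Suc (Suc k)"]
    by (simp add: no_two_consecutive_restrict)
  have "{\<omega> \<in> space M. no_two_consecutive (Suc (Suc k)) (\<lambda>i. X i \<omega>)} \<subseteq> ?A \<union> ?B"
    using no_two_consecutive_Suc_SucD by auto
  then have "prob {\<omega> \<in> space M. no_two_consecutive (Suc (Suc k)) (\<lambda>i. X i \<omega>)} \<le> prob (?A \<union> ?B)"
    using A B by (intro finite_measure_mono) auto
  also have "\<dots> \<le> prob ?A + prob ?B"
    using A B by (rule measure_Un_le)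
  also have "prob ?A = prob {\<omega> \<in> space M. no_two_consecutive (Suc k) (\<lambda>i. X i \<omega>)} * u"
    using indep[of "no_two_consecutive (Suc k)" "Suc k" False] pF
    by (simp add: no_two_consecutive_restrict)
  also have "prob ?B = prob {\<omega> \<in> space M. no_two_consecutive k (\<lambda>i. X i \<omega>) \<and> X k \<omega> = False} * (1 - u)"
    using indep[of "\<lambda>v. no_two_consecutive k v \<and> \<not> v k" "Suc k" True] pX
    by (simp add: no_two_consecutive_restrict)
  also have "prob {\<omega> \<in> space M. no_two_consecutive k (\<lambda>i. X i \<omega>) \<and> X k \<omega> = False}
      = prob {\<omega> \<in> space M. no_two_consecutive k (\<lambda>i. X i \<omega>)} * u"
    using indep[of "no_two_consecutive k" k False] pF
    by (simp add: no_two_consecutive_restrict)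
  finally show ?thesis by (simp add: algebra_simps)
qed

lemma prob_no_two_consecutive_le:
  fixes X :: "nat \<Rightarrow> 'a \<Rightarrow> bool"
  assumes ind: "indep_vars (\<lambda>_. count_space UNIV) X UNIV"
    and pX: "\<And>i. prob {\<omega> \<in> space M. X i \<omega>} = 1 - u"
    and u: "0 \<le> u" "u \<le> 1"
    and lam: "0 < lam" "lam \<le> 1" "lam\<^sup>2 = u * lam + u * (1 - u)"
  shows "lam * prob {\<omega> \<in> space M. no_two_consecutive n (\<lambda>i. X i \<omega>)} \<le> lam ^ n"
proof -
  define f where "f k = prob {\<omega> \<in> space M. no_two_consecutive k (\<lambda>i. X i \<omega>)}" for k
  have "lam * f n \<le> lam ^ n"
    using prob_no_two_consecutive_Suc_Suc[OF ind pX] u lam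
    by (intro two_step_recurrence_le_power[where u = u]) (simp_all add: f_def)
  then show ?thesis by (simp add: f_def)
qed

end

section \<open>Estimates for beta and g\<close>

lemma beta_pos: "0 < u \<Longrightarrow> u \<le> 1 \<Longrightarrow> 0 < beta u"
  unfolding beta_def by (simp add: add_pos_nonneg)

lemma beta_le_one:
  assumes "0 \<le> u" "u \<le> 1"
  shows "beta u \<le> 1"
proof -
  have "u * (4 - 3 * u) \<le> (2 - u)\<^sup>2"
    using zero_le_power2[of "1 - u"] by (simp add: power2_eq_square algebra_simps)
  then have "sqrt (u * (4 - 3 * u)) \<le> 2 - u"
    using assms real_sqrt_le_mono by fastforce
  then show ?thesis unfolding beta_def by simp
qed

lemma beta_squared:
  assumes "0 \<le> u" "u \<le> 1"
  shows "(beta u)\<^sup>2 = u * beta u + u * (1 - u)"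
proof -
  have "(sqrt (u * (4 - 3 * u)))\<^sup>2 = u * (4 - 3 * u)"
    using assms by simp
  then show ?thesis
    unfolding beta_def by (simp add: power2_eq_square field_simps)
qed

lemma beta_ge_sqrt_half:
  assumes "0 \<le> u" "u \<le> 1"
  shows "sqrt u / 2 \<le> beta u"
proof -
  have "sqrt u \<le> sqrt (u * (4 - 3 * u))"
    using assms mult_left_mono[of 1 "4 - 3 * u" u] by (intro real_sqrt_le_mono) auto
  then have "sqrt u \<le> u + sqrt (u * (4 - 3 * u))"
    using assms by linarith
  then show ?thesis unfolding beta_def by (simp add: divide_right_mono)
qed

lemma abs_sqrt_diff_le:
  assumes "0 \<le> a" "0 < b"
  shows "\<bar>sqrt a - sqrt b\<bar> \<le> \<bar>a - b\<bar> / sqrt b"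
proof -
  have "(sqrt a - sqrt b) * (sqrt a + sqrt b) = a - b"
    using assms by (simp add: algebra_simps)
  then have "\<bar>sqrt a - sqrt b\<bar> * (sqrt a + sqrt b) = \<bar>a - b\<bar>"
    using assms by (metis abs_mult abs_of_nonneg add_nonneg_nonneg real_sqrt_ge_zero less_imp_le)
  moreover have "\<bar>sqrt a - sqrt b\<bar> * sqrt b \<le> \<bar>sqrt a - sqrt b\<bar> * (sqrt a + sqrt b)"
    using assms by (intro mult_left_mono) auto
  ultimately show ?thesis using assms by (simp add: pos_le_divide_eq)
qed

lemma beta_diff_le:
  assumes "0 < u0" "u0 \<le> u1" "u1 \<le> 1"
  shows "beta u1 - beta u0 \<le> 3 * (u1 - u0) / sqrt u0"
proof -
  define Y0 Y1 where "Y0 = u0 * (4 - 3 * u0)" and "Y1 = u1 * (4 - 3 * u1)"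
  define r where "r = (u1 - u0) / sqrt u0"
  have "u0 \<le> Y0" unfolding Y0_def using assms mult_left_mono[of 1 "4 - 3 * u0" u0] by auto
  then have su0: "0 < sqrt u0" "sqrt u0 \<le> sqrt Y0" "sqrt u0 \<le> 1" using assms by auto
  have "Y1 - Y0 = (u1 - u0) * (4 - 3 * (u1 + u0))"
    unfolding Y0_def Y1_def by (simp add: algebra_simps)
  then have "\<bar>Y1 - Y0\<bar> = (u1 - u0) * \<bar>4 - 3 * (u1 + u0)\<bar>"
    using assms by (simp add: abs_mult)
  also have "\<dots> \<le> (u1 - u0) * 4"
    using assms by (intro mult_left_mono) auto
  finally have Y_diff: "\<bar>Y1 - Y0\<bar> \<le> 4 * (u1 - u0)" by simp
  have Y_pos: "0 \<le> Y1" "0 < Y0" unfolding Y0_def Y1_def using assms by auto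
  then have "sqrt Y1 - sqrt Y0 \<le> \<bar>Y1 - Y0\<bar> / sqrt Y0"
    using abs_sqrt_diff_le[of Y1 Y0] by linarith
  also have "\<dots> \<le> 4 * (u1 - u0) / sqrt Y0"
    using Y_diff Y_pos by (intro divide_right_mono) auto
  also have "\<dots> \<le> 4 * r"
    unfolding r_def using assms su0 by (auto intro!: divide_left_mono)
  finally have "sqrt Y1 - sqrt Y0 \<le> 4 * r" .
  moreover have "u1 - u0 \<le> r" "0 \<le> r"
    unfolding r_def using assms su0 by (simp_all add: le_divide_eq mult_left_le)
  moreover have "beta u1 - beta u0 = ((u1 - u0) + (sqrt Y1 - sqrt Y0)) / 2"
    unfolding beta_def Y0_def Y1_def by (simp add: field_simps)
  ultimately have "beta u1 - beta u0 \<le> 3 * r"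
    by argo
  then show ?thesis by (simp add: r_def)
qed

lemma one_minus_exp_neg_ge_half:
  fixes z :: real
  assumes "0 \<le> z" "z \<le> 1"
  shows "z / 2 \<le> 1 - exp (- z)"
proof -
  have "exp (- z) \<le> 1 / (1 + z)"
    using exp_ge_add_one_self[of z] assms by (simp add: exp_minus field_simps)
  moreover have "z / 2 \<le> 1 - 1 / (1 + z)"
    using assms mult_left_le[of z z] by (simp add: field_simps)
  ultimately show ?thesis by linarith
qed

lemma exp_neg_diff_le:
  fixes z0 z1 :: real
  assumes "0 \<le> z0" "z0 \<le> z1"
  shows "exp (- z0) - exp (- z1) \<le> z1 - z0"
proof -
  have "1 - exp (z0 - z1) \<le> z1 - z0"
    using exp_ge_add_one_self[of "z0 - z1"] by linarith
  have "exp (- z0) - exp (- z1) = exp (- z0) * (1 - exp (z0 - z1))"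
    by (simp add: algebra_simps flip: exp_add)
  also have "\<dots> \<le> 1 * (z1 - z0)"
    using assms \<open>1 - exp (z0 - z1) \<le> z1 - z0\<close> by (intro mult_mono) auto
  finally show ?thesis by simp
qed

lemma exp_neg_gfun: "0 < z \<Longrightarrow> exp (- gfun z) = beta (1 - exp (- z))"
  by (simp add: gfun_def beta_pos)

lemma gfun_nonneg:
  assumes "0 < z"
  shows "0 \<le> gfun z"
proof -
  have "0 < 1 - exp (- z)" using assms by simp
  then show ?thesis
    unfolding gfun_def using beta_pos beta_le_one by simp
qed

lemma gfun_le_ln:
  assumes "0 < z" "z \<le> 1"
  shows "gfun z \<le> ln (8 / z) / 2"
proof -
  have u: "z / 2 \<le> 1 - exp (- z)" "1 - exp (- z) \<le> 1"
    using one_minus_exp_neg_ge_half assms by auto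
  have "sqrt (z / 8) = sqrt (z / 2) / 2"
    using assms by (intro real_sqrt_unique) (auto simp: power_divide)
  also have "\<dots> \<le> sqrt (1 - exp (- z)) / 2"
    using u by (simp add: divide_right_mono)
  also have "\<dots> \<le> beta (1 - exp (- z))"
    using u assms by (intro beta_ge_sqrt_half) auto
  finally have "ln (sqrt (z / 8)) \<le> ln (beta (1 - exp (- z)))"
    using assms by (intro ln_mono) auto
  then show ?thesis
    using assms by (simp add: gfun_def ln_sqrt ln_div)
qed

lemma gfun_diff_le:
  assumes "0 < z0" "z0 \<le> z1" "z0 \<le> 1"
  shows "gfun z0 - gfun z1 \<le> 12 * (z1 - z0) / z0"
proof -
  define u0 u1 where "u0 = 1 - exp (- z0)" and "u1 = 1 - exp (- z1)"
  have u0: "z0 / 2 \<le> u0" "0 < u0" "u0 \<le> u1" "u1 \<le> 1"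
    using one_minus_exp_neg_ge_half[of z0] assms by (auto simp: u0_def u1_def)
  have b: "0 < beta u0" "0 < beta u1" "sqrt u0 / 2 \<le> beta u0"
    using u0 beta_pos beta_ge_sqrt_half by auto
  have "gfun z0 - gfun z1 = ln (beta u1 / beta u0)"
    using b by (simp add: gfun_def u0_def u1_def ln_div)
  also have "\<dots> \<le> (beta u1 - beta u0) / beta u0"
    using b ln_le_minus_one[of "beta u1 / beta u0"] by (simp add: diff_divide_distrib)
  also have "\<dots> \<le> (3 * (u1 - u0) / sqrt u0) / (sqrt u0 / 2)"
    using beta_diff_le[of u0 u1] u0 b
    by (intro frac_le) (auto intro: mult_nonneg_nonneg)
  also have "\<dots> = 6 * (u1 - u0) / u0"
    using u0 by (simp add: field_simps)
  also have "\<dots> \<le> 6 * (z1 - z0) / (z0 / 2)"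
    using exp_neg_diff_le[of z0 z1] u0 assms by (intro frac_le) (auto simp: u0_def u1_def)
  also have "\<dots> = 12 * (z1 - z0) / z0"
    by simp
  finally show ?thesis .
qed

lemma critical_scale_bounds:
  fixes q A :: real
  assumes q: "0 < q" "q \<le> 1 / 9" and A: "1 / sqrt q \<le> A" "A \<le> 1 / sqrt q + 1"
  shows "sqrt q \<le> 1 / 3" "1 \<le> A" "sqrt q \<le> A * q" "A * q \<le> 1"
proof -
  have "sqrt q \<le> sqrt ((1 / 3)\<^sup>2)"
    using q by (intro real_sqrt_le_mono) (simp add: power2_eq_square)
  then show s: "sqrt q \<le> 1 / 3" by simp
  have "3 \<le> 1 / sqrt q" using s q by (simp add: field_simps)
  then show "1 \<le> A" using A by simp
  have "sqrt q = 1 / sqrt q * q" using q by (simp add: field_simps)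
  also have "\<dots> \<le> A * q" using A q by (intro mult_right_mono) auto
  finally show "sqrt q \<le> A * q" .
  have "A * q \<le> (1 / sqrt q + 1) * q" using A q by (intro mult_right_mono) auto
  also have "\<dots> = sqrt q + q" using q by (simp add: field_simps)
  also have "\<dots> \<le> 1" using s q by linarith
  finally show "A * q \<le> 1" .
qed

lemma gfun_critical_le_ln:
  fixes q A :: real
  assumes q: "0 < q" "q \<le> 1 / 9" and A: "1 / sqrt q \<le> A" "A \<le> 1 / sqrt q + 1"
  shows "gfun (A * q) \<le> ln (1 / q)"
proof -
  define s where "s = sqrt q"
  note bounds = critical_scale_bounds[OF q A, folded s_def]
  have s: "0 < s" "s\<^sup>2 = q" using q by (simp_all add: s_def)
  have "s ^ 3 \<le> (1 / 3) ^ 3"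
    using bounds s by (intro power_mono) auto
  then have "8 * s ^ 3 \<le> 1"
    by (simp add: power_divide)
  then have "(8 * s ^ 3) * s \<le> 1 * s"
    using s by (intro mult_right_mono) auto
  then have "8 * q\<^sup>2 \<le> A * q"
    using bounds by (simp add: s(2)[symmetric] eval_nat_numeral algebra_simps)
  then have "8 / (A * q) \<le> 8 / (8 * q\<^sup>2)"
    using q bounds by (intro divide_left_mono) auto
  then have "ln (8 / (A * q)) \<le> ln (1 / q * (1 / q))"
    using bounds s by (intro ln_mono) (auto simp: power2_eq_square)
  also have "\<dots> = 2 * ln (1 / q)"
    using q ln_mult[of "1 / q" "1 / q"] by simp
  finally show ?thesis
    using gfun_le_ln[of "A * q"] bounds s by simp
qed

lemma gfun_critical_diff_le:
  fixes q A m :: real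
  assumes q: "0 < q" "q \<le> 1 / 9" and A: "1 / sqrt q \<le> A" "A \<le> 1 / sqrt q + 1"
    and m: "A \<le> m" "m \<le> A + 3"
  shows "gfun (A * q) - gfun (m * q) \<le> 36 * sqrt q"
proof -
  note bounds = critical_scale_bounds[OF q A]
  have "(m - A) * q \<le> 3 * q" "A * q \<le> m * q"
    using m q by (auto intro!: mult_right_mono)
  then have "gfun (A * q) - gfun (m * q) \<le> 12 * (m * q - A * q) / (A * q)"
    using gfun_diff_le[of "A * q" "m * q"] bounds q by (simp add: left_diff_distrib)
  also have "\<dots> \<le> 12 * (3 * q) / sqrt q"
    using bounds q \<open>(m - A) * q \<le> 3 * q\<close> by (intro frac_le) (auto simp: left_diff_distrib)
  also have "\<dots> = 36 * sqrt q"
    using q by (simp add: field_simps)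
  finally show ?thesis .
qed

lemma powr_neg_half: "0 < x \<Longrightarrow> x powr (-1/2) = 1 / sqrt x"
  using powr_minus[of x "1/2"] by (simp add: powr_half_sqrt inverse_eq_divide)

lemma gfun_exponent_le:
  fixes q A w h :: real
  assumes q: "0 < q" "q \<le> 1 / 9"
    and A: "1 / sqrt q \<le> A" "A \<le> 1 / sqrt q + 1"
    and min: "A \<le> min w h" "min w h \<le> A + 3"
    and sum: "w + h \<le> ln (1 / q) / q"
  shows "- (max w h - 1) * gfun (min w h * q)
    \<le> - (w - A) * gfun (A * q) - (h - A) * gfun (A * q) + 39 * q powr (-1/2) * ln (1 / q)"
proof -
  define s L m N where "s = sqrt q" and "L = ln (1 / q)" and "m = min w h" and "N = max w h"
  define G0 G1 where "G0 = gfun (A * q)" and "G1 = gfun (m * q)"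
  note bounds = critical_scale_bounds[OF q A, folded s_def]
  have s: "0 < s" "s\<^sup>2 = q" using q by (simp_all add: s_def)
  have G: "0 \<le> G0" "0 \<le> G1" "G0 \<le> L" "G0 - G1 \<le> 36 * s"
    using gfun_nonneg[of "A * q"] gfun_nonneg[of "m * q"] bounds s min
      gfun_critical_le_ln[OF q A] gfun_critical_diff_le[OF q A, of m]
    by (auto simp: G0_def G1_def L_def m_def s_def intro!: mult_pos_pos)
  have N: "0 \<le> N - A" "N - A \<le> L / q"
    using min sum bounds by (auto simp: N_def L_def)
  have "(N - A) * G1 \<le> (N - 1) * G1"
    using bounds G by (intro mult_right_mono) auto
  then have "- (N - 1) * G1 \<le> - (N - A) * G0 + (N - A) * (G0 - G1)"
    by (simp add: algebra_simps)
  also have "\<dots> \<le> - (N - A) * G0 + (N - A) * (36 * s)"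
    using N G by (intro add_left_mono mult_left_mono) auto
  also have "\<dots> \<le> - (N - A) * G0 + (L / q) * (36 * s)"
    using N s by (intro add_left_mono mult_right_mono) auto
  also have "\<dots> = - (N - A) * G0 + 36 * (L / s)"
    using s by (simp add: s(2)[symmetric] power2_eq_square)
  also have "\<dots> \<le> - (m - A) * G0 - (N - A) * G0 + 39 * (L / s)"
  proof -
    have "(m - A) * G0 \<le> 3 * L"
      using min G by (intro mult_mono) (auto simp: m_def)
    moreover have "L \<le> L / s"
      using bounds s q by (simp add: L_def le_divide_eq mult_left_le)
    ultimately show ?thesis by linarith
  qed
  also have "- (m - A) * G0 - (N - A) * G0 + 39 * (L / s)
      = - (w - A) * G0 - (h - A) * G0 + 39 * q powr (-1/2) * ln (1 / q)"
  proof -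
    have "m + N = w + h"
      by (simp add: m_def N_def)
    then have "(m + N) * G0 = (w + h) * G0"
      by simp
    then show ?thesis
      using powr_neg_half[OF q(1)] by (simp add: L_def s_def algebra_simps)
  qed
  finally show ?thesis
    unfolding G0_def G1_def m_def N_def .
qed

section \<open>The initial configuration\<close>

lemma space_Pp [simp]: "space (Pp p) = UNIV"
  by (simp add: Pp_def space_PiM)

lemma prob_space_Pp: "prob_space (Pp p)"
  unfolding Pp_def by (intro prob_space_PiM prob_space_measure_pmf)

lemma indep_vars_Pp_sites:
  "prob_space.indep_vars (Pp p) (\<lambda>x. measure_pmf (site_pmf p x)) (\<lambda>x \<omega>. \<omega> x) UNIV"
proof -
  interpret prob_space "Pp p" by (rule prob_space_Pp)
  have rv: "random_variable (measure_pmf (site_pmf p x)) (\<lambda>\<omega>. \<omega> x)" for x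
    unfolding Pp_def by (rule measurable_component_singleton) simp
  have "PiM UNIV (\<lambda>x. distr (Pp p) (measure_pmf (site_pmf p x)) (\<lambda>\<omega>. \<omega> x)) = Pp p"
    unfolding Pp_def by (intro PiM_cong refl distr_PiM_component) (auto simp: prob_space_measure_pmf)
  moreover have "distr (Pp p) (PiM UNIV (\<lambda>x. measure_pmf (site_pmf p x))) (\<lambda>\<omega>. restrict \<omega> UNIV) = Pp p"
    by (simp add: Pp_def restrict_UNIV)
  ultimately show ?thesis
    by (subst indep_vars_iff_distr_eq_PiM[OF _ rv]) auto
qed

lemma indep_vars_Pp_all_empty:
  assumes "\<And>i. finite (K i)" and "disjoint_family K"
  shows "prob_space.indep_vars (Pp p) (\<lambda>_. count_space UNIV) (\<lambda>i \<omega>. \<forall>x\<in>K i. \<omega> x = Empty) UNIV"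
proof -
  interpret prob_space "Pp p" by (rule prob_space_Pp)
  have "indep_vars (\<lambda>i. PiM (K i) (\<lambda>x. measure_pmf (site_pmf p x))) (\<lambda>i \<omega>. restrict \<omega> (K i)) UNIV"
    using indep_vars_restrict[OF indep_vars_Pp_sites] assms(2) by simp
  moreover have "Measurable.pred (PiM (K i) (\<lambda>x. measure_pmf (site_pmf p x))) (\<lambda>\<omega>. \<forall>x\<in>K i. \<omega> x = Empty)"
    for i
    using assms(1) by (intro pred_intros_finite measurable_compose[OF measurable_component_singleton]) auto
  ultimately have "indep_vars (\<lambda>_. count_space UNIV)
      (\<lambda>i \<omega>. (\<lambda>\<omega>. \<forall>x\<in>K i. \<omega> x = Empty) (restrict \<omega> (K i))) UNIV"
    by (rule indep_vars_compose2)
  then show ?thesis by simp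
qed

lemma pmf_site_pmf_Empty: "0 \<le> p \<Longrightarrow> p \<le> 1 \<Longrightarrow> pmf (site_pmf p x) Empty = 1 - p"
proof -
  assume "0 \<le> p" "p \<le> 1"
  moreover have "(\<lambda>b. if b then (if x = (0, 0) then Active else Occupied) else Empty) -` {Empty} = {False}"
    by auto
  ultimately show ?thesis by (simp add: site_pmf_def pmf_map measure_pmf_single)
qed

lemma measure_Pp_all_empty:
  assumes "finite J" "0 \<le> p" "p \<le> 1"
  shows "measure (Pp p) {\<omega>. \<forall>x\<in>J. \<omega> x = Empty} = (1 - p) ^ card J"
proof -
  have site: "emeasure (measure_pmf (site_pmf p x)) {Empty} = ennreal (1 - p)" for x
    using assms(2,3) by (simp add: emeasure_pmf_single pmf_site_pmf_Empty)
  have "{\<omega>. \<forall>x\<in>J. \<omega> x = Empty} = prod_emb UNIV (\<lambda>x. measure_pmf (site_pmf p x)) J (PiE J (\<lambda>_. {Empty}))"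
    by (auto simp: prod_emb_def space_PiM restrict_def fun_eq_iff) metis
  then have "emeasure (Pp p) {\<omega>. \<forall>x\<in>J. \<omega> x = Empty}
      = (\<Prod>x\<in>J. emeasure (measure_pmf (site_pmf p x)) {Empty})"
    unfolding Pp_def by (simp only:) (rule emeasure_PiM_emb, auto simp: assms(1) prob_space_measure_pmf)
  also have "\<dots> = (\<Prod>x\<in>J. ennreal (1 - p))"
    using site by simp
  also have "\<dots> = ennreal ((1 - p) ^ card J)"
    using assms by (simp add: prod_ennreal ennreal_power)
  finally show ?thesis using assms by (simp add: measure_def)
qed

lemma qq_pos: "0 < p \<Longrightarrow> p < 1 \<Longrightarrow> 0 < qq p"
  by (simp add: qq_def)

lemma power_one_minus_eq_exp_qq: "p < 1 \<Longrightarrow> (1 - p) ^ m = exp (- (real m * qq p))"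
  by (simp add: qq_def exp_of_nat_mult)

lemma measure_Pp_le_no_two_consecutive_empty:
  assumes fin: "\<And>i. finite (K i)" and disj: "disjoint_family K" and card: "\<And>i. card (K i) = m"
    and m: "0 < m" and p: "0 < p" "p < 1"
    and S: "S \<subseteq> {\<omega>. no_two_consecutive H (\<lambda>i. \<forall>x\<in>K i. \<omega> x = Empty)}"
  shows "measure (Pp p) S \<le> exp (- (real H - 1) * gfun (real m * qq p))"
proof -
  interpret prob_space "Pp p" by (rule prob_space_Pp)
  note indep = indep_vars_Pp_all_empty[OF fin disj, of p]
  define g where "g = gfun (real m * qq p)"
  define u where "u = 1 - (1 - p) ^ m"
  have "(1 - p) ^ m < 1" using p m by (simp add: power_less_one_iff)
  then have u: "0 < u" "u \<le> 1" using p by (auto simp: u_def)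
  have "0 < real m * qq p"
    using m p qq_pos by simp
  then have beta_u: "beta u = exp (- g)"
    using exp_neg_gfun p by (simp add: g_def u_def power_one_minus_eq_exp_qq)
  have "prob {\<omega>. \<forall>x\<in>K i. \<omega> x = Empty} = 1 - u" for i
    using measure_Pp_all_empty[OF fin] p card by (simp add: u_def)
  then have "beta u * prob {\<omega>. no_two_consecutive H (\<lambda>i. \<forall>x\<in>K i. \<omega> x = Empty)} \<le> beta u ^ H"
    using prob_no_two_consecutive_le[OF indep, of u "beta u" H] u beta_pos beta_le_one beta_squared
    by simp
  moreover have "prob S \<le> prob {\<omega>. no_two_consecutive H (\<lambda>i. \<forall>x\<in>K i. \<omega> x = Empty)}"
    using S events_no_two_consecutive[of "\<lambda>i \<omega>. \<forall>x\<in>K i. \<omega> x = Empty" H] indep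
    by (intro finite_measure_mono) (simp_all add: indep_vars_def)
  moreover have "beta u ^ H = beta u * exp (- (real H - 1) * g)"
    unfolding beta_u by (simp add: exp_of_nat_mult[symmetric] mult_exp_exp algebra_simps)
  ultimately show ?thesis
    using beta_pos[OF u] by (simp add: g_def mult_le_cancel_left_pos)
qed

lemma G_event_subset_no_two_consecutive_empty_rows:
  "G_event (a, b, c, d)
    \<subseteq> {\<omega>. no_two_consecutive (nat (d - b + 1)) (\<lambda>i. \<forall>x\<in>{a..c} \<times> {b + int i}. \<omega> x = Empty)}"
proof (intro subsetI CollectI)
  fix \<omega> assume G: "\<omega> \<in> G_event (a, b, c, d)"
  have False if "Suc i < nat (d - b + 1)"
    "\<forall>x\<in>{a..c} \<times> {b + int i}. \<omega> x = Empty" "\<forall>x\<in>{a..c} \<times> {b + int (Suc i)}. \<omega> x = Empty" for i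
  proof -
    from that have "double_gap_rows (a, b, c, d) \<omega>"
      unfolding double_gap_rows_def by (auto intro!: exI[of _ "b + int i"] simp: algebra_simps)
    with G show False by (simp add: G_event_def)
  qed
  then show "no_two_consecutive (nat (d - b + 1)) (\<lambda>i. \<forall>x\<in>{a..c} \<times> {b + int i}. \<omega> x = Empty)"
    unfolding no_two_consecutive_def by blast
qed

lemma G_event_subset_no_two_consecutive_empty_cols:
  "G_event (a, b, c, d)
    \<subseteq> {\<omega>. no_two_consecutive (nat (c - a + 1)) (\<lambda>i. \<forall>x\<in>{a + int i} \<times> {b..d}. \<omega> x = Empty)}"
proof (intro subsetI CollectI)
  fix \<omega> assume G: "\<omega> \<in> G_event (a, b, c, d)"
  have False if "Suc i < nat (c - a + 1)"
    "\<forall>x\<in>{a + int i} \<times> {b..d}. \<omega> x = Empty" "\<forall>x\<in>{a + int (Suc i)} \<times> {b..d}. \<omega> x = Empty" for i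
  proof -
    from that have "double_gap_cols (a, b, c, d) \<omega>"
      unfolding double_gap_cols_def by (auto intro!: exI[of _ "a + int i"] simp: algebra_simps)
    with G show False by (simp add: G_event_def)
  qed
  then show "no_two_consecutive (nat (c - a + 1)) (\<lambda>i. \<forall>x\<in>{a + int i} \<times> {b..d}. \<omega> x = Empty)"
    unfolding no_two_consecutive_def by blast
qed

lemma measure_G_event_le_rows:
  assumes "a \<le> c" "b \<le> d" and p: "0 < p" "p < 1"
  shows "measure (Pp p) (G_event (a, b, c, d))
    \<le> exp (- (real_of_int (d - b + 1) - 1) * gfun (real_of_int (c - a + 1) * qq p))"
proof -
  have "measure (Pp p) (G_event (a, b, c, d))
      \<le> exp (- (real (nat (d - b + 1)) - 1) * gfun (real (nat (c - a + 1)) * qq p))"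
    by (rule measure_Pp_le_no_two_consecutive_empty[OF _ _ _ _ p
          G_event_subset_no_two_consecutive_empty_rows])
      (use assms in \<open>auto simp: disjoint_family_on_def card_cartesian_product\<close>)
  then show ?thesis using assms by simp
qed

lemma measure_G_event_le_cols:
  assumes "a \<le> c" "b \<le> d" and p: "0 < p" "p < 1"
  shows "measure (Pp p) (G_event (a, b, c, d))
    \<le> exp (- (real_of_int (c - a + 1) - 1) * gfun (real_of_int (d - b + 1) * qq p))"
proof -
  have "measure (Pp p) (G_event (a, b, c, d))
      \<le> exp (- (real (nat (c - a + 1)) - 1) * gfun (real (nat (d - b + 1)) * qq p))"
    by (rule measure_Pp_le_no_two_consecutive_empty[OF _ _ _ _ p
          G_event_subset_no_two_consecutive_empty_cols])
      (use assms in \<open>auto simp: disjoint_family_on_def card_cartesian_product\<close>)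
  then show ?thesis using assms by simp
qed

lemma measure_G_event_le:
  assumes "rset R \<noteq> {}" and p: "0 < p" "p < 1"
  shows "measure (Pp p) (G_event R)
    \<le> exp (- (max (real_of_int (rwidth R)) (real_of_int (rheight R)) - 1)
             * gfun (min (real_of_int (rwidth R)) (real_of_int (rheight R)) * qq p))"
proof -
  obtain a b c d where R: "R = (a, b, c, d)" by (cases R)
  with assms(1) have "a \<le> c" "b \<le> d" by (auto simp: rset_def)
  then show ?thesis
    using measure_G_event_le_rows[OF _ _ p] measure_G_event_le_cols[OF _ _ p]
    by (cases "c - a \<le> d - b") (auto simp: R rwidth_def rheight_def max_def min_def)
qed

lemma rwidth_rheight_mono:
  assumes "rset R \<subseteq> rset R'" "rset R \<noteq> {}"
  shows "rwidth R \<le> rwidth R'" "rheight R \<le> rheight R'"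
proof -
  obtain a b c d where R: "R = (a, b, c, d)" by (cases R)
  obtain a' b' c' d' where R': "R' = (a', b', c', d')" by (cases R')
  have "a \<le> c" "b \<le> d" using assms(2) by (auto simp: R rset_def)
  then have "(a, b) \<in> rset R" "(c, d) \<in> rset R" by (simp_all add: R rset_def)
  with assms(1) have "(a, b) \<in> rset R'" "(c, d) \<in> rset R'" by blast+
  then show "rwidth R \<le> rwidth R'" "rheight R \<le> rheight R'"
    by (auto simp: R R' rset_def rwidth_def rheight_def)
qed

lemma qq_bounds:
  assumes "0 < p" "p < 1 / 10"
  shows "0 < qq p" "qq p \<le> 1 / 9"
proof -
  show "0 < qq p" using assms by (simp add: qq_pos)
  have "qq p = ln (1 / (1 - p))" using assms by (simp add: qq_def ln_div)
  also have "\<dots> \<le> 1 / (1 - p) - 1" using assms by (intro ln_le_minus_one) auto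
  also have "\<dots> \<le> 1 / 9" using assms by (simp add: field_simps)
  finally show "qq p \<le> 1 / 9" .
qed

lemma AA_bounds: "1 / sqrt (qq p) \<le> AA p" "AA p \<le> 1 / sqrt (qq p) + 1"
  using ceiling_correct[of "1 / sqrt (qq p)"] by (auto simp: AA_def)

lemma good_seq_first_rect:
  fixes w h :: real
  assumes "good_seq p n R"
  defines "w \<equiv> real_of_int (rwidth (R 1))" and "h \<equiv> real_of_int (rheight (R 1))"
  shows "rset (R 1) \<noteq> {}" "AA p \<le> min w h" "min w h \<le> real_of_int (AA p) + 3"
    "w + h \<le> ln (1 / qq p) / qq p"
proof -
  have n: "1 \<le> n" and nonempty: "rset (R 1) \<noteq> {}"
    and chain: "\<And>i. i \<in> {1..n} \<Longrightarrow> rset (R i) \<subseteq> rset (R (i + 1))"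
    using assms(1) by (auto simp: good_seq_def)
  have "rset (R 1) \<subseteq> rset (R k)" if "1 \<le> k" "k \<le> n" for k
    using that
  proof (induction k rule: dec_induct)
    case (step k)
    then show ?case using chain[of k] by auto
  qed simp
  from rwidth_rheight_mono[OF this[OF n order_refl] nonempty] assms(1)
  have "rwidth (R 1) + rheight (R 1) \<le> \<lfloor>1 / qq p * ln (1 / qq p)\<rfloor>"
    by (auto simp: good_seq_def BB_def)
  then show "w + h \<le> ln (1 / qq p) / qq p"
    unfolding le_floor_iff by (simp add: w_def h_def)
  show "rset (R 1) \<noteq> {}" by (fact nonempty)
  show "AA p \<le> min w h" "min w h \<le> real_of_int (AA p) + 3"
    using assms(1) by (auto simp: good_seq_def w_def h_def min_def)
qed

theorem lemma13:
  shows "\<exists>C5::real. \<forall>p::real. 0 < p \<and> p < 0.1 \<longrightarrow>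
    (\<forall>(n::nat) (R::nat \<Rightarrow> rect). good_seq p n R \<longrightarrow>
      (let q = qq p; a0 = real_of_int (AA p); b0 = real_of_int (AA p);
           s0 = real_of_int (rwidth (R 1)) - a0; t0 = real_of_int (rheight (R 1)) - b0
       in measure (Pp p) (G_event (R 1))
          \<le> exp (- s0 * gfun (b0 * q) - t0 * gfun (a0 * q) + C5 * q powr (-1/2) * ln (1 / q))))"
proof -
  have bound: "measure (Pp p) (G_event (R 1))
      \<le> exp (- (real_of_int (rwidth (R 1)) - real_of_int (AA p)) * gfun (real_of_int (AA p) * qq p)
             - (real_of_int (rheight (R 1)) - real_of_int (AA p)) * gfun (real_of_int (AA p) * qq p)
             + 39 * qq p powr (-1/2) * ln (1 / qq p))"
    if p: "0 < p" "p < 1 / 10" and good: "good_seq p n R" for p n and R :: "nat \<Rightarrow> rect"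
  proof -
    note rect = good_seq_first_rect[OF good]
    have "measure (Pp p) (G_event (R 1))
        \<le> exp (- (max (real_of_int (rwidth (R 1))) (rheight (R 1)) - 1)
               * gfun (min (real_of_int (rwidth (R 1))) (rheight (R 1)) * qq p))"
      using measure_G_event_le[OF rect(1)] p by simp
    also have "\<dots> \<le> exp (- (real_of_int (rwidth (R 1)) - real_of_int (AA p)) * gfun (real_of_int (AA p) * qq p)
             - (real_of_int (rheight (R 1)) - real_of_int (AA p)) * gfun (real_of_int (AA p) * qq p)
             + 39 * qq p powr (-1/2) * ln (1 / qq p))"
      using gfun_exponent_le[OF qq_bounds[OF p] AA_bounds rect(2-4)] by simp
    finally show ?thesis .
  qed
  show ?thesis
    unfolding Let_def by (intro exI[of _ 39] allI impI bound) auto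
qed

end
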